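(* Let $L\subset\mathbb{Z}^m$ be a non-zero lattice with $L\cap\mathbb{N}^m=\{\mathbf 0\}$ and $\mathrm{Sat}(L)=\ker_{\mathbb{Z}}(\mathcal{A})$. Then $\mathcal{T}_{\min}=\mathcal{C}_{\min}$.
   Context: $K$ is a field, $\mathbf x^{\mathbf u}=x_1^{u_1}\cdots x_m^{u_m}$, $\mathbf u_\pm$ are the positive/negative parts of $\mathbf u\in\mathbb{Z}^m$, $I_L=(\mathbf x^{\mathbf u_+}-\mathbf x^{\mathbf u_-}:\mathbf u\in L)\subset K[x_1,\ldots,x_m]$, $\mathrm{Sat}(L)=\{\mathbf u:d\mathbf u\in L\text{ for some nonzero }d\in\mathbb{Z}\}$, $\mathcal{A}=\{\mathbf a_1,\ldots,\mathbf a_m\}\subset\mathbb{Z}^n$ and $\ker_{\mathbb{Z}}(\mathcal{A})=\{\mathbf q\in\mathbb{Z}^m:\sum q_i\mathbf a_i=0\}$. A circuit of $\mathcal{A}$ is a nonzero $\mathbf u\in\ker_{\mathbb{Z}}(\mathcal{A})$ with inclusion-minimal support $\mathrm{supp}(\mathbf u)=\{i:u_i\neq0\}$ among nonzero vectors of $\ker_{\mathbb{Z}}(\mathcal{A})$ and relatively prime coordinates. $\mathcal{C}$ is the set of all $E\subseteq\{1,\ldots,m\}$ with $E=\mathrm{supp}(\mathbf u_+)$ or $E=\mathrm{supp}(\mathbf u_-)$ for some circuit $\mathbf u$, and $\mathcal{C}_{\min}$ its inclusion-minimal elements. A monomial $M$ is indispensable of $I_L$ if every system of binomial generators of $I_L$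 contains a binomial having $M$ as a monomial; $\mathcal{T}_{\min}$ is the set of inclusion-minimal elements among the supports of indispensable monomials of $I_L$ (with $\mathrm{supp}(\mathbf x^{\mathbf w})=\mathrm{supp}(\mathbf w)$). *)

theory Defs
  imports Main "HOL-Library.Poly_Mapping"
begin

text \<open>Polynomial ring K[x_i : i in 'n] over a field, variables indexed by a finite type 'n
  (so m = CARD('n)); polynomials are finitely supported maps from exponent vectors to K.\<close>
type_synonym ('n, 'k) mpoly = "('n \<Rightarrow>\<^sub>0 nat) \<Rightarrow>\<^sub>0 'k"

definition monom_x :: "('n \<Rightarrow> nat) \<Rightarrow> ('n::finite, 'k::field) mpoly" where
  "monom_x w = Poly_Mapping.single (Abs_poly_mapping w) 1"

definition pos_part :: "('n \<Rightarrow> int) \<Rightarrow> 'n \<Rightarrow> nat" where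
  "pos_part u = (\<lambda>i. nat (u i))"

definition neg_part :: "('n \<Rightarrow> int) \<Rightarrow> 'n \<Rightarrow> nat" where
  "neg_part u = (\<lambda>i. nat (- u i))"

definition supp :: "('n \<Rightarrow> 'a::zero) \<Rightarrow> 'n set" where
  "supp u = {i. u i \<noteq> 0}"

definition ideal_gen :: "('a::comm_ring_1) set \<Rightarrow> 'a set" where
  "ideal_gen G = {\<Sum>g\<in>F. c g * g | F c. finite F \<and> F \<subseteq> G}"

definition is_lattice :: "('n \<Rightarrow> int) set \<Rightarrow> bool" where
  "is_lattice L \<longleftrightarrow> (\<lambda>i. 0) \<in> L \<and> (\<forall>u\<in>L. \<forall>v\<in>L. (\<lambda>i. u i + v i) \<in> L) \<and> (\<forall>u\<in>L. (\<lambda>i. - u i) \<in> L)"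

definition lattice_ideal :: "('n::finite \<Rightarrow> int) set \<Rightarrow> ('n, 'k::field) mpoly set" where
  "lattice_ideal L = ideal_gen {monom_x (pos_part u) - monom_x (neg_part u) | u. u \<in> L}"

definition Sat :: "('n \<Rightarrow> int) set \<Rightarrow> ('n \<Rightarrow> int) set" where
  "Sat L = {u. \<exists>d::int. d \<noteq> 0 \<and> (\<lambda>i. d * u i) \<in> L}"

text \<open>A configuration a_1..a_m in Z^n, given as A :: 'n \<Rightarrow> ('d \<Rightarrow> int).\<close>
definition kerZ :: "('n::finite \<Rightarrow> 'd \<Rightarrow> int) \<Rightarrow> ('n \<Rightarrow> int) set" where
  "kerZ A = {q. \<forall>j. (\<Sum>i\<in>UNIV. q i * A i j) = 0}"

definition is_circuit :: "('n::finite \<Rightarrow> 'd \<Rightarrow> int) \<Rightarrow> ('n \<Rightarrow> int) \<Rightarrow> bool" where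
  "is_circuit A u \<longleftrightarrow> u \<in> kerZ A \<and> u \<noteq> (\<lambda>i. 0) \<and>
     (\<forall>v\<in>kerZ A. v \<noteq> (\<lambda>i. 0) \<longrightarrow> supp v \<subseteq> supp u \<longrightarrow> supp v = supp u) \<and>
     (\<forall>d::int. (\<forall>i. d dvd u i) \<longrightarrow> is_unit d)"

definition minimal_sets :: "'a set set \<Rightarrow> 'a set set" where
  "minimal_sets S = {E\<in>S. \<forall>F\<in>S. F \<subseteq> E \<longrightarrow> F = E}"

definition circuit_supports :: "('n::finite \<Rightarrow> 'd \<Rightarrow> int) \<Rightarrow> 'n set set" where
  "circuit_supports A =
     {E. \<exists>u. is_circuit A u \<and> (E = supp (pos_part u) \<or> E = supp (neg_part u))}"

definition is_binomial :: "('n::finite, 'k::field) mpoly \<Rightarrow> bool" where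
  "is_binomial f \<longleftrightarrow> (\<exists>a b. a \<noteq> b \<and> f = monom_x a - monom_x b)"

definition indispensable_monomial :: "('n::finite, 'k::field) mpoly set \<Rightarrow> ('n \<Rightarrow> nat) \<Rightarrow> bool" where
  "indispensable_monomial I w \<longleftrightarrow>
     (\<forall>G. (\<forall>g\<in>G. is_binomial g) \<and> ideal_gen G = I \<longrightarrow>
        (\<exists>g\<in>G. Poly_Mapping.lookup g (Abs_poly_mapping w) \<noteq> 0))"

definition T_min :: "('n::finite \<Rightarrow> int) set \<Rightarrow> 'k::field itself \<Rightarrow> 'n set set" where
  "T_min L K = minimal_sets
     {supp w | w. indispensable_monomial (lattice_ideal L :: ('n, 'k) mpoly set) w}"

end

(* Both families are the minimal elements of the supports supp(u+) of positive parts of nonzero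
   vectors u, taken in L and in ker(A) respectively; saturating L does not change these supports.

   Indispensable monomials: the coefficient sum over any coset of L vanishes on I_L, so a binomial
   x^p - x^q lies in I_L only if p - q is in L. Hence an indispensable monomial occurs in some
   generator x^(u+) - x^(u-), and conversely, for u in L with supp(u+) minimal and u+ of least
   degree, no binomial of I_L has a monomial properly dividing x^(u+), which forces x^(u+) into
   every binomial generating set.

   Circuits: every nonzero kernel vector u has a sign-conformal circuit c (c_i > 0 only where
   u_i > 0): while u is not support-minimal, cancel one coordinate of u against a kernel vector of
   smaller support without creating sign changes, and finally divide by the gcd. *)

theory Submission
  imports Defs Complex_Main
begin

lemma lookup_Abs_poly_mapping_finite [simp]:
  "Poly_Mapping.lookup (Abs_poly_mapping (w :: 'n::finite \<Rightarrow> 'a::zero)) = w"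
  by (simp add: lookup_Abs_poly_mapping)

lemma Abs_poly_mapping_finite_inject [simp]:
  "Abs_poly_mapping (w :: 'n::finite \<Rightarrow> 'a::zero) = Abs_poly_mapping v \<longleftrightarrow> w = v"
  by (metis lookup_Abs_poly_mapping_finite)

lemma lookup_monom_x:
  "Poly_Mapping.lookup (monom_x w :: ('n::finite, 'k::field) mpoly) a =
     (if a = Abs_poly_mapping w then 1 else 0)"
  by (simp add: monom_x_def lookup_single when_def)

lemma keys_monom_x [simp]:
  "Poly_Mapping.keys (monom_x w :: ('n::finite, 'k::field) mpoly) = {Abs_poly_mapping w}"
  by (simp add: monom_x_def)

lemma poly_mapping_sum_single:
  "(\<Sum>a\<in>Poly_Mapping.keys f. Poly_Mapping.single a (Poly_Mapping.lookup f a)) = f"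
proof (rule poly_mapping_eqI)
  fix k
  show "Poly_Mapping.lookup (\<Sum>a\<in>Poly_Mapping.keys f. Poly_Mapping.single a (Poly_Mapping.lookup f a)) k
      = Poly_Mapping.lookup f k"
    by (cases "k \<in> Poly_Mapping.keys f")
       (auto simp: lookup_sum lookup_single when_def in_keys_iff sum.delta)
qed

lemma mult_eq_sum_single:
  fixes c g :: "'m::comm_monoid_add \<Rightarrow>\<^sub>0 'k::comm_semiring_1"
  shows "c * g = (\<Sum>l\<in>Poly_Mapping.keys c. \<Sum>q\<in>Poly_Mapping.keys g.
            Poly_Mapping.single (l + q) (Poly_Mapping.lookup c l * Poly_Mapping.lookup g q))"
proof -
  have "c * g = (\<Sum>l\<in>Poly_Mapping.keys c. Poly_Mapping.single l (Poly_Mapping.lookup c l))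
              * (\<Sum>q\<in>Poly_Mapping.keys g. Poly_Mapping.single q (Poly_Mapping.lookup g q))"
    by (simp only: poly_mapping_sum_single)
  then show ?thesis
    by (simp add: sum_product mult_single)
qed

lemma ideal_gen_generator: "g \<in> G \<Longrightarrow> g \<in> ideal_gen G"
  unfolding ideal_gen_def by (intro CollectI exI[of _ "{g}"] exI[of _ "\<lambda>_. 1"]) auto

lemma ideal_gen_insert_zero: "ideal_gen (insert 0 G) = ideal_gen G"
proof
  show "ideal_gen (insert 0 G) \<subseteq> ideal_gen G"
  proof
    fix f assume "f \<in> ideal_gen (insert 0 G)"
    then obtain F c where F: "finite F" "F \<subseteq> insert 0 G" "f = (\<Sum>g\<in>F. c g * g)"
      unfolding ideal_gen_def by blast
    then have "f = (\<Sum>g\<in>F - {0}. c g * g)"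
      by (cases "0 \<in> F") (simp_all add: sum.remove)
    with F show "f \<in> ideal_gen G"
      unfolding ideal_gen_def by blast
  qed
qed (auto simp: ideal_gen_def)

lemma ideal_gen_exponent_divisible:
  fixes G :: "('m::comm_monoid_add \<Rightarrow>\<^sub>0 'k::comm_ring_1) set"
  assumes "f \<in> ideal_gen G" and "Poly_Mapping.lookup f m \<noteq> 0"
  obtains g a b where "g \<in> G" "b \<in> Poly_Mapping.keys g" "m = a + b"
proof -
  obtain F c where F: "finite F" "F \<subseteq> G" "f = (\<Sum>g\<in>F. c g * g)"
    using assms(1) unfolding ideal_gen_def by blast
  with assms(2) obtain g where "g \<in> F" "m \<in> Poly_Mapping.keys (c g * g)"
    by (metis (no_types, lifting) in_keys_iff lookup_sum sum.neutral)
  with F(2) keys_mult[of "c g" g] show thesis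
    using that by blast
qed

definition coset_sum :: "('n \<Rightarrow> int) set \<Rightarrow> ('n \<Rightarrow> int) \<Rightarrow> (('n \<Rightarrow>\<^sub>0 nat) \<Rightarrow>\<^sub>0 'k::comm_ring_1) \<Rightarrow> 'k" where
  "coset_sum L r f = (\<Sum>a\<in>Poly_Mapping.keys f.
      if (\<lambda>i. int (Poly_Mapping.lookup a i) - r i) \<in> L then Poly_Mapping.lookup f a else 0)"

lemma coset_sum_superset:
  assumes "finite S" "Poly_Mapping.keys f \<subseteq> S"
  shows "coset_sum L r f = (\<Sum>a\<in>S.
      if (\<lambda>i. int (Poly_Mapping.lookup a i) - r i) \<in> L then Poly_Mapping.lookup f a else 0)"
  unfolding coset_sum_def
  by (rule sum.mono_neutral_left) (use assms in \<open>auto simp: in_keys_iff\<close>)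

lemma coset_sum_add: "coset_sum L r (f + g) = coset_sum L r f + coset_sum L r g"
proof -
  let ?S = "Poly_Mapping.keys f \<union> Poly_Mapping.keys g"
  have "Poly_Mapping.keys (f + g) \<subseteq> ?S"
    by (rule keys_add)
  then show ?thesis
    by (simp add: coset_sum_superset[of ?S] sum.distrib[symmetric])
       (auto intro!: sum.cong simp: Poly_Mapping.lookup_add)
qed

lemma coset_sum_zero [simp]: "coset_sum L r 0 = 0"
  by (simp add: coset_sum_def)

lemma coset_sum_sum: "coset_sum L r (\<Sum>g\<in>F. h g) = (\<Sum>g\<in>F. coset_sum L r (h g))"
  by (induction F rule: infinite_finite_induct) (simp_all add: coset_sum_add)

lemma coset_sum_diff: "coset_sum L r (f - g) = coset_sum L r f - coset_sum L r g"
  by (metis add_diff_cancel_right' coset_sum_add diff_add_cancel)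

lemma coset_sum_single:
  "coset_sum L r (Poly_Mapping.single a x) =
     (if (\<lambda>i. int (Poly_Mapping.lookup a i) - r i) \<in> L then x else 0)"
  by (simp add: coset_sum_def)

lemma coset_sum_monom_x:
  "coset_sum L r (monom_x w :: ('n::finite, 'k::field) mpoly) =
     (if (\<lambda>i. int (w i) - r i) \<in> L then 1 else 0)"
  by (simp add: monom_x_def coset_sum_single)

text \<open>Multiplying by the monomial x^l shifts the coset by l.\<close>
lemma coset_sum_mult:
  "coset_sum L r (c * g) = (\<Sum>l\<in>Poly_Mapping.keys c.
      Poly_Mapping.lookup c l * coset_sum L (\<lambda>i. r i - int (Poly_Mapping.lookup l i)) g)"
proof -
  have coset_shift: "(\<lambda>i. int (Poly_Mapping.lookup (l + q) i) - r i)
      = (\<lambda>i. int (Poly_Mapping.lookup q i) - (r i - int (Poly_Mapping.lookup l i)))" for l q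
    by (simp add: lookup_add algebra_simps)
  show ?thesis
    by (simp add: mult_eq_sum_single[of c g] coset_sum_sum coset_sum_single coset_shift
        coset_sum_def[of L _ g] sum_distrib_left)
       (auto intro!: sum.cong)
qed

lemma is_lattice_zero: "is_lattice L \<Longrightarrow> (\<lambda>i. 0) \<in> L"
  unfolding is_lattice_def by blast

lemma is_lattice_add: "is_lattice L \<Longrightarrow> u \<in> L \<Longrightarrow> v \<in> L \<Longrightarrow> (\<lambda>i. u i + v i) \<in> L"
  unfolding is_lattice_def by blast

lemma is_lattice_uminus: "is_lattice L \<Longrightarrow> u \<in> L \<Longrightarrow> (\<lambda>i. - u i) \<in> L"
  unfolding is_lattice_def by blast

lemma is_lattice_diff: "is_lattice L \<Longrightarrow> u \<in> L \<Longrightarrow> v \<in> L \<Longrightarrow> (\<lambda>i. u i - v i) \<in> L"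
  using is_lattice_add[of L u "\<lambda>i. - v i"] is_lattice_uminus[of L v] by simp

lemma pos_part_uminus [simp]: "pos_part (\<lambda>i. - u i) = neg_part u"
  by (simp add: pos_part_def neg_part_def)

lemma supp_pos_part: "supp (pos_part u) = {i. 0 < u i}"
  by (auto simp: supp_def pos_part_def)

lemma pos_part_eq_neg_part_iff: "pos_part u = neg_part u \<longleftrightarrow> u = (\<lambda>i. 0)"
proof
  assume "pos_part u = neg_part u"
  then have eq: "nat (u i) = nat (- u i)" for i
    by (simp add: pos_part_def neg_part_def fun_eq_iff)
  have "u i = 0" for i
    using eq[of i] by (cases "u i \<ge> 0") auto
  then show "u = (\<lambda>i. 0)"
    by auto
qed (simp add: pos_part_def neg_part_def)

definition lattice_binomial :: "('n::finite \<Rightarrow> int) \<Rightarrow> ('n, 'k::field) mpoly" where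
  "lattice_binomial u = monom_x (pos_part u) - monom_x (neg_part u)"

lemma lattice_ideal_eq: "lattice_ideal L = ideal_gen (lattice_binomial ` L)"
  by (simp add: lattice_ideal_def lattice_binomial_def Setcompr_eq_image)

lemma lattice_binomial_zero [simp]: "lattice_binomial (\<lambda>i. 0) = 0"
  by (simp add: lattice_binomial_def pos_part_def neg_part_def)

lemma is_binomial_lattice_binomial: "u \<noteq> (\<lambda>i. 0) \<Longrightarrow> is_binomial (lattice_binomial u)"
  unfolding is_binomial_def lattice_binomial_def
  by (intro exI[of _ "pos_part u"] exI[of _ "neg_part u"]) (simp add: pos_part_eq_neg_part_iff)

lemma lookup_lattice_binomial_nonzero:
  "Poly_Mapping.lookup (lattice_binomial u) a \<noteq> 0 \<Longrightarrow>
     a = Abs_poly_mapping (pos_part u) \<or> a = Abs_poly_mapping (neg_part u)"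
  by (auto simp: lattice_binomial_def lookup_minus lookup_monom_x split: if_splits)

lemma coset_sum_lattice_binomial:
  assumes "is_lattice L" and "u \<in> L"
  shows "coset_sum L r (lattice_binomial u :: ('n::finite, 'k::field) mpoly) = 0"
proof -
  have "(\<lambda>i. int (neg_part u i) - r i) = (\<lambda>i. (int (pos_part u i) - r i) - u i)"
    and "(\<lambda>i. int (pos_part u i) - r i) = (\<lambda>i. (int (neg_part u i) - r i) + u i)"
    by (simp_all add: fun_eq_iff pos_part_def neg_part_def)
  then have "(\<lambda>i. int (pos_part u i) - r i) \<in> L \<longleftrightarrow> (\<lambda>i. int (neg_part u i) - r i) \<in> L"
    using is_lattice_add[OF assms(1) _ assms(2)] is_lattice_diff[OF assms(1) _ assms(2)]
    by metis
  then show ?thesis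
    by (simp add: lattice_binomial_def coset_sum_diff coset_sum_monom_x)
qed

lemma coset_sum_lattice_ideal:
  assumes "is_lattice L" and "f \<in> (lattice_ideal L :: ('n::finite, 'k::field) mpoly set)"
  shows "coset_sum L r f = 0"
proof -
  obtain F c where F: "finite F" "F \<subseteq> lattice_binomial ` L" "f = (\<Sum>g\<in>F. c g * g)"
    using assms(2) unfolding lattice_ideal_eq ideal_gen_def by blast
  have "coset_sum L r' g = 0" if "g \<in> F" for g r'
    using F(2) that coset_sum_lattice_binomial[OF assms(1)] by blast
  then show ?thesis
    unfolding F(3) by (simp add: coset_sum_sum coset_sum_mult)
qed

lemma lattice_ideal_binomial_exponents:
  assumes "is_lattice L"
    and "(monom_x p - monom_x q :: ('n::finite, 'k::field) mpoly) \<in> lattice_ideal L"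
  shows "(\<lambda>i. int (p i) - int (q i)) \<in> L"
proof -
  have "coset_sum L (\<lambda>i. int (p i)) (monom_x p - monom_x q :: ('n, 'k) mpoly) = 0"
    using coset_sum_lattice_ideal[OF assms] .
  then have "(\<lambda>i. int (q i) - int (p i)) \<in> L"
    using is_lattice_zero[OF assms(1)] by (simp add: coset_sum_diff coset_sum_monom_x split: if_splits)
  from is_lattice_uminus[OF assms(1) this] show ?thesis
    by simp
qed

lemma minimal_sets_eqI:
  assumes sub: "C \<subseteq> P" and below: "\<And>E. E \<in> P \<Longrightarrow> \<exists>F\<in>C. F \<subseteq> E"
  shows "minimal_sets C = minimal_sets P"
proof (intro set_eqI iffI)
  fix E assume "E \<in> minimal_sets C"
  then have E: "E \<in> C" "\<And>F. F \<in> C \<Longrightarrow> F \<subseteq> E \<Longrightarrow> F = E"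
    by (auto simp: minimal_sets_def)
  have "F = E" if F: "F \<in> P" "F \<subseteq> E" for F
  proof -
    obtain F' where "F' \<in> C" "F' \<subseteq> F"
      using below[OF F(1)] by blast
    with E(2) F(2) show ?thesis
      by blast
  qed
  with E(1) sub show "E \<in> minimal_sets P"
    by (auto simp: minimal_sets_def)
next
  fix E assume "E \<in> minimal_sets P"
  then have E: "E \<in> P" "\<And>F. F \<in> P \<Longrightarrow> F \<subseteq> E \<Longrightarrow> F = E"
    by (auto simp: minimal_sets_def)
  obtain F' where "F' \<in> C" "F' \<subseteq> E"
    using below[OF E(1)] by blast
  with E(2) sub have "E \<in> C"
    by auto
  with E(2) sub show "E \<in> minimal_sets C"
    by (auto simp: minimal_sets_def)
qed

lemma ex_minimal_sets_subset:
  fixes P :: "'n::finite set set"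
  assumes "E \<in> P"
  shows "\<exists>F\<in>minimal_sets P. F \<subseteq> E"
  using assms
proof (induction "card E" arbitrary: E rule: less_induct)
  case less
  show ?case
  proof (cases "E \<in> minimal_sets P")
    case False
    then obtain F where "F \<in> P" "F \<subset> E"
      using less.prems unfolding minimal_sets_def by blast
    with less.hyps[of F] show ?thesis
      by (meson finite psubset_card_mono subset_trans psubset_imp_subset)
  qed blast
qed

definition pos_supports :: "('n \<Rightarrow> int) set \<Rightarrow> 'n set set" where
  "pos_supports M = {supp (pos_part u) | u. u \<in> M \<and> u \<noteq> (\<lambda>i. 0)}"

lemma indispensable_supp_in_pos_supports:
  assumes L: "is_lattice L"
    and "indispensable_monomial (lattice_ideal L :: ('n::finite, 'k::field) mpoly set) w"
  shows "supp w \<in> pos_supports L"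
proof -
  let ?G = "lattice_binomial ` (L - {\<lambda>i. 0}) :: ('n, 'k) mpoly set"
  have "lattice_binomial ` L = insert 0 ?G"
    using is_lattice_zero[OF L] lattice_binomial_zero by (metis image_insert insert_Diff)
  then have "ideal_gen ?G = lattice_ideal L"
    by (simp add: lattice_ideal_eq ideal_gen_insert_zero)
  moreover have "\<forall>g\<in>?G. is_binomial g"
    by (auto intro: is_binomial_lattice_binomial)
  ultimately obtain u where u: "u \<in> L" "u \<noteq> (\<lambda>i. 0)"
    and "Poly_Mapping.lookup (lattice_binomial u :: ('n, 'k) mpoly) (Abs_poly_mapping w) \<noteq> 0"
    using assms(2) unfolding indispensable_monomial_def by blast
  then have "w = pos_part u \<or> w = pos_part (\<lambda>i. - u i)"
    by (auto dest: lookup_lattice_binomial_nonzero)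
  moreover have "(\<lambda>i. - u i) \<in> L" "(\<lambda>i. - u i) \<noteq> (\<lambda>i. 0)"
    using is_lattice_uminus[OF L u(1)] u(2) by (auto simp: fun_eq_iff)
  ultimately show ?thesis
    unfolding pos_supports_def using u by blast
qed

text \<open>Any expression of x^(u+) - x^(u-) through binomial generators has a term reaching x^(u+),
  so some generator has a monomial dividing x^(u+); by minimality that monomial is x^(u+).\<close>
lemma indispensable_pos_part:
  assumes L: "is_lattice L" and u: "u \<in> L" "u \<noteq> (\<lambda>i. 0)"
    and minimal: "\<And>p q. (\<lambda>i. int (p i) - int (q i)) \<in> L \<Longrightarrow> p \<noteq> q \<Longrightarrow>
                    \<forall>i. p i \<le> pos_part u i \<Longrightarrow> p = pos_part u"
  shows "indispensable_monomial (lattice_ideal L :: ('n::finite, 'k::field) mpoly set) (pos_part u)"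
  unfolding indispensable_monomial_def
proof (intro allI impI)
  fix G :: "('n, 'k) mpoly set"
  assume G: "(\<forall>g\<in>G. is_binomial g) \<and> ideal_gen G = lattice_ideal L"
  have "lattice_binomial u \<in> ideal_gen G"
    using G u(1) by (simp add: lattice_ideal_eq ideal_gen_generator)
  moreover have "Poly_Mapping.lookup (lattice_binomial u :: ('n, 'k) mpoly) (Abs_poly_mapping (pos_part u)) = 1"
    using u(2) by (simp add: lattice_binomial_def lookup_minus lookup_monom_x pos_part_eq_neg_part_iff)
  ultimately obtain g a b where g: "g \<in> G" "b \<in> Poly_Mapping.keys g"
    and ab: "Abs_poly_mapping (pos_part u) = a + b"
    by (auto elim: ideal_gen_exponent_divisible[where m = "Abs_poly_mapping (pos_part u)"])
  obtain p q where pq: "p \<noteq> q" "g = monom_x p - monom_x q"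
    using G g(1) unfolding is_binomial_def by blast
  have pq_L: "(\<lambda>i. int (p i) - int (q i)) \<in> L"
    using G g(1) pq(2) ideal_gen_generator lattice_ideal_binomial_exponents[OF L] by metis
  have qp_L: "(\<lambda>i. int (q i) - int (p i)) \<in> L"
    using is_lattice_uminus[OF L pq_L] by simp
  have b_le: "Poly_Mapping.lookup b i \<le> pos_part u i" for i
    using arg_cong[OF ab, of "\<lambda>x. Poly_Mapping.lookup x i"] by (simp add: Poly_Mapping.lookup_add)
  have "b = Abs_poly_mapping p \<or> b = Abs_poly_mapping q"
    using g(2) pq(2) by (auto simp: in_keys_iff lookup_minus lookup_monom_x split: if_splits)
  then have "pos_part u = p \<or> pos_part u = q"
    using minimal[OF pq_L pq(1)] minimal[OF qp_L pq(1)[symmetric]] b_le by auto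
  then have "Poly_Mapping.lookup g (Abs_poly_mapping (pos_part u)) \<noteq> 0"
    using pq by (auto simp: lookup_minus lookup_monom_x)
  with g(1) show "\<exists>g\<in>G. Poly_Mapping.lookup g (Abs_poly_mapping (pos_part u)) \<noteq> 0"
    by blast
qed

lemma minimal_pos_support_indispensable:
  assumes L: "is_lattice L" and E: "E \<in> minimal_sets (pos_supports L)"
  obtains w where "indispensable_monomial (lattice_ideal L :: ('n::finite, 'k::field) mpoly set) w"
    and "supp w = E"
proof -
  let ?cands = "{u. u \<in> L \<and> u \<noteq> (\<lambda>i. 0) \<and> supp (pos_part u) = E}"
  obtain u0 where "u0 \<in> ?cands"
    using E unfolding minimal_sets_def pos_supports_def by blast
  then obtain u where u: "u \<in> ?cands"
    and least: "\<And>v. v \<in> ?cands \<Longrightarrow> sum (pos_part u) UNIV \<le> sum (pos_part v) UNIV"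
    using ex_has_least_nat[of "\<lambda>u. u \<in> ?cands" u0 "\<lambda>u. sum (pos_part u) UNIV"] by blast
  have minimal: "p = pos_part u"
    if pq: "(\<lambda>i. int (p i) - int (q i)) \<in> L" "p \<noteq> q" and p_le: "\<forall>i. p i \<le> pos_part u i" for p q
  proof -
    define v where "v = (\<lambda>i. int (p i) - int (q i))"
    have v: "v \<in> L" "v \<noteq> (\<lambda>i. 0)"
      using pq by (auto simp: v_def fun_eq_iff)
    have v_le: "pos_part v i \<le> p i" for i
      by (simp add: v_def pos_part_def)
    have v_le_u: "pos_part v i \<le> pos_part u i" for i
      using v_le p_le le_trans by blast
    then have "supp (pos_part v) \<subseteq> supp (pos_part u)"
      unfolding supp_def by (metis (mono_tags) Collect_mono le_zero_eq)
    with u have "supp (pos_part v) \<subseteq> E"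
      by simp
    moreover have "supp (pos_part v) \<in> pos_supports L"
      using v unfolding pos_supports_def by blast
    ultimately have "supp (pos_part v) = E"
      using E unfolding minimal_sets_def by blast
    then have "sum (pos_part u) UNIV \<le> sum (pos_part v) UNIV"
      using least v by blast
    moreover have "sum (pos_part v) UNIV \<le> sum (pos_part u) UNIV"
      using v_le_u by (rule sum_mono)
    ultimately have sum_eq: "sum (pos_part v) UNIV = sum (pos_part u) UNIV"
      by (rule antisym[rotated])
    have "pos_part v i = pos_part u i" for i
      by (rule sum_mono_inv[OF sum_eq]) (simp_all add: v_le_u)
    then show "p = pos_part u"
      using v_le p_le by (intro ext le_antisym) auto
  qed
  from u have "indispensable_monomial (lattice_ideal L :: ('n, 'k) mpoly set) (pos_part u)"
    by (intro indispensable_pos_part[OF L _ _ minimal]) simp_all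
  with u show thesis
    using that by blast
qed

lemma T_min_eq_minimal_pos_supports:
  assumes "is_lattice L"
  shows "T_min L TYPE('k::field) = minimal_sets (pos_supports (L :: ('n::finite \<Rightarrow> int) set))"
proof -
  let ?S = "{supp w | w. indispensable_monomial (lattice_ideal L :: ('n, 'k) mpoly set) w}"
  have "?S \<subseteq> pos_supports L"
    using indispensable_supp_in_pos_supports[OF assms, where 'k = 'k] by blast
  moreover have "\<exists>F\<in>?S. F \<subseteq> E" if E: "E \<in> pos_supports L" for E
  proof -
    obtain F where F: "F \<in> minimal_sets (pos_supports L)" "F \<subseteq> E"
      using ex_minimal_sets_subset[OF E] by blast
    obtain w where "indispensable_monomial (lattice_ideal L :: ('n, 'k) mpoly set) w" "supp w = F"
      using minimal_pos_support_indispensable[OF assms F(1)] .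
    with F(2) show ?thesis
      by blast
  qed
  ultimately show ?thesis
    unfolding T_min_def by (rule minimal_sets_eqI)
qed

lemma kerZ_diff_scaled:
  assumes "u \<in> kerZ A" and "v \<in> kerZ A"
  shows "(\<lambda>i. a * u i - b * v i) \<in> kerZ A"
proof -
  have "(\<Sum>i\<in>UNIV. (a * u i - b * v i) * A i j)
      = a * (\<Sum>i\<in>UNIV. u i * A i j) - b * (\<Sum>i\<in>UNIV. v i * A i j)" for j
    by (simp add: left_diff_distrib sum_subtractf sum_distrib_left mult.assoc)
  with assms show ?thesis
    unfolding kerZ_def by simp
qed

lemma kerZ_uminus: "u \<in> kerZ A \<Longrightarrow> (\<lambda>i. - u i) \<in> kerZ A"
  using kerZ_diff_scaled[of u A u 0 1] by simp

lemma kerZ_cancel_factor: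
  assumes "(\<lambda>i. d * u i) \<in> kerZ A" and "d \<noteq> 0"
  shows "u \<in> kerZ A"
proof -
  have "d * (\<Sum>i\<in>UNIV. u i * A i j) = (\<Sum>i\<in>UNIV. d * u i * A i j)" for j
    by (simp add: sum_distrib_left mult.assoc)
  with assms show ?thesis
    unfolding kerZ_def by simp
qed

lemma supp_pos_part_mult_pos:
  "0 < (d::int) \<Longrightarrow> supp (pos_part (\<lambda>i. d * u i)) = supp (pos_part u)"
  by (simp add: supp_pos_part zero_less_mult_iff)

lemma pos_supports_Sat:
  assumes L: "is_lattice L"
  shows "pos_supports (Sat L) = pos_supports L"
proof
  have "L \<subseteq> Sat L"
    unfolding Sat_def by (auto intro!: exI[of _ 1])
  then show "pos_supports L \<subseteq> pos_supports (Sat L)"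
    unfolding pos_supports_def by blast
next
  show "pos_supports (Sat L) \<subseteq> pos_supports L"
  proof
    fix E assume "E \<in> pos_supports (Sat L)"
    then obtain u d where u: "u \<noteq> (\<lambda>i. 0)" "E = supp (pos_part u)"
      and d: "d \<noteq> 0" "(\<lambda>i. d * u i) \<in> L"
      unfolding pos_supports_def Sat_def by blast
    have "(\<lambda>i. \<bar>d\<bar> * u i) \<in> L"
    proof (cases "0 < d")
      case False
      with d show ?thesis
        using is_lattice_uminus[OF L d(2)] by simp
    qed (use d in simp)
    moreover have "(\<lambda>i. \<bar>d\<bar> * u i) \<noteq> (\<lambda>i. 0)"
      using u(1) d(1) by (auto simp: fun_eq_iff)
    moreover have "E = supp (pos_part (\<lambda>i. \<bar>d\<bar> * u i))"
      using u(2) d(1) by (simp add: supp_pos_part_mult_pos)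
    ultimately show "E \<in> pos_supports L"
      unfolding pos_supports_def by blast
  qed
qed

lemma circuit_supports_subset: "circuit_supports A \<subseteq> pos_supports (kerZ A)"
proof
  fix E assume "E \<in> circuit_supports A"
  then obtain u where u: "u \<in> kerZ A" "u \<noteq> (\<lambda>i. 0)"
    and "E = supp (pos_part u) \<or> E = supp (pos_part (\<lambda>i. - u i))"
    unfolding circuit_supports_def is_circuit_def by auto
  moreover have "(\<lambda>i. - u i) \<in> kerZ A" "(\<lambda>i. - u i) \<noteq> (\<lambda>i. 0)"
    using kerZ_uminus[OF u(1)] u(2) by (auto simp: fun_eq_iff)
  ultimately show "E \<in> pos_supports (kerZ A)"
    unfolding pos_supports_def by blast
qed

lemma circuit_of_support_minimal:
  assumes u: "u \<in> kerZ A" "u \<noteq> (\<lambda>i. 0)"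
    and minimal: "\<forall>v\<in>kerZ A. v \<noteq> (\<lambda>i. 0) \<longrightarrow> supp v \<subseteq> supp u \<longrightarrow> supp v = supp u"
  obtains c where "is_circuit A c" "\<And>i. 0 < c i \<longleftrightarrow> 0 < u i"
proof -
  define g where "g = Gcd (range u)"
  have "g \<noteq> 0"
    using u(2) by (auto simp: g_def Gcd_0_iff)
  then have g_pos: "0 < g"
    using Gcd_int_greater_eq_0[of "range u"] unfolding g_def by linarith
  define c where "c i = u i div g" for i
  have "g dvd u i" for i
    unfolding g_def by (rule Gcd_dvd) simp
  then have c: "u i = g * c i" for i
    by (simp add: c_def)
  have "c \<in> kerZ A"
  proof (rule kerZ_cancel_factor)
    show "(\<lambda>i. g * c i) \<in> kerZ A"
      using u(1) by (simp add: c[symmetric])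
  qed (use g_pos in simp)
  moreover have "supp c = supp u"
    using g_pos by (simp add: supp_def c)
  moreover have "c \<noteq> (\<lambda>i. 0)"
    using u(2) by (auto simp: c fun_eq_iff)
  moreover have "is_unit d" if d: "\<forall>i. d dvd c i" for d :: int
  proof -
    have "d * g dvd u i" for i
      using d by (simp add: c mult.commute[of g] mult_dvd_mono)
    then have "d * g dvd g"
      unfolding g_def by (intro Gcd_greatest) auto
    with g_pos show ?thesis
      using dvd_times_right_cancel_iff[of g d 1] by simp
  qed
  ultimately have "is_circuit A c"
    using minimal unfolding is_circuit_def by simp
  moreover have "0 < c i \<longleftrightarrow> 0 < u i" for i
    using g_pos by (simp add: c zero_less_mult_iff)
  ultimately show thesis
    using that by blast
qed

lemma sign_of_diff_scaled:
  fixes a b x y :: int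
  assumes "0 < a" "0 < b" "x \<noteq> 0" "0 < x * y \<Longrightarrow> b * \<bar>y\<bar> \<le> a * \<bar>x\<bar>"
  shows "0 < a * x - b * y \<Longrightarrow> 0 < x" and "a * x - b * y < 0 \<Longrightarrow> x < 0"
proof -
  consider "0 < x" "0 < y" | "x < 0" "y < 0" | "0 < x" "y \<le> 0" | "x < 0" "0 \<le> y"
    using assms(3) by linarith
  then have "(0 < x \<and> b * y \<le> a * x) \<or> (x < 0 \<and> a * x \<le> b * y)"
  proof cases
    case 1
    with assms(4) show ?thesis
      by (simp add: mult_pos_pos)
  next
    case 2
    with assms(4) show ?thesis
      by (simp add: mult_neg_neg)
  next
    case 3
    with assms(1,2) show ?thesis
      by (meson dual_order.trans mult_nonneg_nonpos less_imp_le mult_pos_pos zero_less_mult_iff)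
  next
    case 4
    with assms(1,2) show ?thesis
      by (meson dual_order.trans less_imp_le mult_nonneg_nonneg mult_pos_neg)
  qed
  then show "0 < a * x - b * y \<Longrightarrow> 0 < x" and "a * x - b * y < 0 \<Longrightarrow> x < 0"
    by auto
qed

text \<open>The elimination step behind conformal decomposition: subtracting from u the largest
  multiple of v that does not overshoot u on the coordinates where u and v have the same sign
  kills one coordinate of u without creating any sign change.\<close>
lemma conformal_elimination:
  fixes u v :: "'n::finite \<Rightarrow> int"
  assumes supp: "supp v \<subseteq> supp u" and j: "0 < u j * v j"
  obtains a b k where "0 < a" "0 < b" "u k \<noteq> 0" "a * u k = b * v k"
    "\<And>i. 0 < a * u i - b * v i \<Longrightarrow> 0 < u i" "\<And>i. a * u i - b * v i < 0 \<Longrightarrow> u i < 0"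
proof -
  define S where "S = {i. 0 < u i * v i}"
  define ratio where "ratio i = real_of_int \<bar>u i\<bar> / real_of_int \<bar>v i\<bar>" for i
  define k where "k = arg_min_on ratio S"
  have "S \<noteq> {}"
    using j by (auto simp: S_def)
  then have "k \<in> S" and "\<forall>i\<in>S. \<not> ratio i < ratio k"
    using arg_min_if_finite[of S ratio] by (simp_all add: k_def)
  then have k_min: "\<And>i. i \<in> S \<Longrightarrow> ratio k \<le> ratio i"
    by (simp add: not_less)
  from \<open>k \<in> S\<close> have uk_vk: "0 < u k * v k"
    by (simp add: S_def)
  define a where "a = \<bar>v k\<bar>"
  define b where "b = \<bar>u k\<bar>"
  have ab: "0 < a" "0 < b"
    using uk_vk by (auto simp: a_def b_def)
  have "b * \<bar>v i\<bar> \<le> a * \<bar>u i\<bar>" if "0 < u i * v i" for i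
  proof -
    have "ratio k \<le> ratio i"
      using that by (intro k_min) (simp add: S_def)
    moreover have "0 < \<bar>v i\<bar>" "0 < \<bar>v k\<bar>"
      using that uk_vk by auto
    ultimately have "real_of_int (\<bar>u k\<bar> * \<bar>v i\<bar>) \<le> real_of_int (\<bar>u i\<bar> * \<bar>v k\<bar>)"
      by (simp add: ratio_def divide_le_eq le_divide_eq mult.commute mult.left_commute)
    then show ?thesis
      unfolding a_def b_def of_int_le_iff by (simp add: mult.commute)
  qed
  then have conformal: "(0 < a * u i - b * v i \<longrightarrow> 0 < u i) \<and> (a * u i - b * v i < 0 \<longrightarrow> u i < 0)" for i
  proof (cases "u i = 0")
    case True
    with supp have "v i = 0"
      by (auto simp: supp_def)
    with True show ?thesis
      by simp
  qed (use sign_of_diff_scaled[OF ab] in blast)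
  moreover have "a * u k = b * v k"
    using uk_vk by (auto simp: a_def b_def zero_less_mult_iff)
  moreover have "u k \<noteq> 0"
    using uk_vk by auto
  ultimately show thesis
    using that ab by blast
qed

lemma kerZ_conformal_reduction:
  assumes u: "u \<in> kerZ A" and v: "v \<in> kerZ A" "v \<noteq> (\<lambda>i. 0)" and supp: "supp v \<subset> supp u"
  obtains w where "w \<in> kerZ A" "w \<noteq> (\<lambda>i. 0)" "supp w \<subset> supp u" "\<And>i. 0 < w i \<Longrightarrow> 0 < u i"
proof -
  obtain j where "v j \<noteq> 0"
    using v(2) by auto
  with supp have "u j \<noteq> 0"
    by (auto simp: supp_def)
  define v' where "v' = (if 0 < u j * v j then v else (\<lambda>i. - v i))"
  have v': "v' \<in> kerZ A" "supp v' = supp v" "0 < u j * v' j"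
    using v(1) kerZ_uminus[OF v(1)] \<open>v j \<noteq> 0\<close> \<open>u j \<noteq> 0\<close>
    by (auto simp: v'_def supp_def mult_less_0_iff zero_less_mult_iff)
  obtain a b k where ab: "0 < a" "0 < b" and k: "u k \<noteq> 0" "a * u k = b * v' k"
    and pos: "\<And>i. 0 < a * u i - b * v' i \<Longrightarrow> 0 < u i"
    and neg: "\<And>i. a * u i - b * v' i < 0 \<Longrightarrow> u i < 0"
    using conformal_elimination[of v' u j] supp v'(2,3) by auto
  define w where "w = (\<lambda>i. a * u i - b * v' i)"
  have "supp w \<subseteq> supp u"
    using pos neg by (fastforce simp: supp_def w_def neq_iff)
  moreover have "k \<in> supp u - supp w"
    using k by (simp add: supp_def w_def)
  ultimately have "supp w \<subset> supp u"
    by blast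
  moreover have "w \<noteq> (\<lambda>i. 0)"
  proof
    assume "w = (\<lambda>i. 0)"
    then have eq: "a * u i = b * v' i" for i
      by (simp add: w_def fun_eq_iff)
    have "v' i \<noteq> 0" if "u i \<noteq> 0" for i
      using ab eq[of i] that by auto
    then have "supp u \<subseteq> supp v'"
      by (auto simp: supp_def)
    with supp v'(2) show False
      by blast
  qed
  moreover have "w \<in> kerZ A"
    unfolding w_def using u v'(1) by (rule kerZ_diff_scaled)
  ultimately show thesis
    using that pos by (simp add: w_def)
qed

lemma ex_conformal_circuit:
  assumes "u \<in> kerZ A" and "u \<noteq> (\<lambda>i. 0)"
  shows "\<exists>c. is_circuit A c \<and> (\<forall>i. 0 < c i \<longrightarrow> 0 < u i)"
  using assms
proof (induction "card (supp u)" arbitrary: u rule: less_induct)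
  case less
  show ?case
  proof (cases "\<forall>v\<in>kerZ A. v \<noteq> (\<lambda>i. 0) \<longrightarrow> supp v \<subseteq> supp u \<longrightarrow> supp v = supp u")
    case True
    then show ?thesis
      using circuit_of_support_minimal[OF less.prems] by metis
  next
    case False
    then obtain v where "v \<in> kerZ A" "v \<noteq> (\<lambda>i. 0)" "supp v \<subset> supp u"
      by blast
    then obtain w where w: "w \<in> kerZ A" "w \<noteq> (\<lambda>i. 0)" "supp w \<subset> supp u"
      and conformal: "\<And>i. 0 < w i \<Longrightarrow> 0 < u i"
      using kerZ_conformal_reduction[OF less.prems(1)] by blast
    have "card (supp w) < card (supp u)"
      using w(3) by (simp add: psubset_card_mono)
    then obtain c where "is_circuit A c" "\<forall>i. 0 < c i \<longrightarrow> 0 < w i"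
      using less.hyps w(1,2) by blast
    with conformal show ?thesis
      by blast
  qed
qed

lemma minimal_circuit_supports:
  "minimal_sets (circuit_supports A) = minimal_sets (pos_supports (kerZ A))"
proof (rule minimal_sets_eqI[OF circuit_supports_subset])
  fix E assume "E \<in> pos_supports (kerZ A)"
  then obtain u where u: "u \<in> kerZ A" "u \<noteq> (\<lambda>i. 0)" "E = supp (pos_part u)"
    unfolding pos_supports_def by blast
  then obtain c where c: "is_circuit A c" "\<forall>i. 0 < c i \<longrightarrow> 0 < u i"
    using ex_conformal_circuit by blast
  then have "supp (pos_part c) \<in> circuit_supports A"
    unfolding circuit_supports_def by blast
  moreover have "supp (pos_part c) \<subseteq> E"
    using c(2) u(3) by (auto simp: supp_pos_part)
  ultimately show "\<exists>F\<in>circuit_supports A. F \<subseteq> E"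
    by blast
qed

theorem proposition2p6:
  fixes L :: "('n::finite \<Rightarrow> int) set"
    and A :: "'n \<Rightarrow> 'd::finite \<Rightarrow> int"
  assumes "is_lattice L"
    and "L \<noteq> {\<lambda>i. 0}"
    and "\<forall>u\<in>L. (\<forall>i. u i \<ge> 0) \<longrightarrow> u = (\<lambda>i. 0)"
    and "Sat L = kerZ A"
  shows "T_min L TYPE('k::field) = minimal_sets (circuit_supports A)"
proof -
  have "T_min L TYPE('k) = minimal_sets (pos_supports L)"
    using assms(1) by (rule T_min_eq_minimal_pos_supports)
  also have "\<dots> = minimal_sets (pos_supports (kerZ A))"
    using pos_supports_Sat[OF assms(1)] assms(4) by simp
  also have "\<dots> = minimal_sets (circuit_supports A)"
    by (rule minimal_circuit_supports[symmetric])
  finally show ?thesis .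
qed

end
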